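(* $\mathfrak{L}(SL(2,\mathbb{Z})) \subsetneq \mathfrak{L}(SL(2,\mathbb{Q}))$.
   Context: For a group $G$ with identity $e$, a $G$-automaton is a tuple $(Q,\Sigma,G,\delta,q_0,Q_a)$ where $Q$ is a finite set of states, $\Sigma$ a finite input alphabet, $q_0\in Q$ the initial state, $Q_a\subseteq Q$ the accepting states, and $\delta$ assigns to each $(q,\sigma)\in Q\times(\Sigma\cup\{\varepsilon\})$ a finite set of pairs $(q',m)\in Q\times G$. The register holds an element of $G$, initially $e$; using a transition $(q',m)\in\delta(q,\sigma)$ the automaton reads $\sigma$ (or nothing), moves to $q'$ and replaces the register content $x$ by $xm$. A word is accepted if some computation reads it entirely and ends in an accepting state with register equal to $e$. $\mathfrak{L}(G)$ is the class of languages recognized by $G$-automata. $SL(2,\mathbb{Z})$ (resp. $SL(2,\mathbb{Q})$) is the group of $2\times2$ matrices with integer (resp. rational) entries and determinant $1$. *)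

theory Defs
  imports Complex_Main "HOL-Algebra.Group"
begin

text \<open>2x2 matrices are represented as quadruples (a,b,c,d) standing for [[a,b],[c,d]].
  SL(2,R) is the group of such matrices of determinant 1, as a HOL-Algebra monoid record.\<close>

definition SL2 :: "('r::comm_ring_1 \<times> 'r \<times> 'r \<times> 'r) monoid" where
  "SL2 = \<lparr> carrier = {(a,b,c,d). a*d - b*c = 1},
           mult = (\<lambda>(a,b,c,d) (e,f,g,h). (a*e + b*g, a*f + b*h, c*e + d*g, c*f + d*h)),
           one = (1,0,0,1) \<rparr>"

abbreviation SL2Z :: "(int \<times> int \<times> int \<times> int) monoid" where "SL2Z \<equiv> SL2"
abbreviation SL2Q :: "(rat \<times> rat \<times> rat \<times> rat) monoid" where "SL2Q \<equiv> SL2"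

text \<open>A G-automaton over alphabet \<Sigma>, with states in Q (a finite set of naturals),
  transitions given as a finite set of tuples (q, \<sigma>, q', m) where \<sigma> = None is an
  \<epsilon>-move, initial state q0 and accepting states Qa.\<close>

definition is_gaut ::
  "('g,'x) monoid_scheme \<Rightarrow> 'a set \<Rightarrow> nat set \<Rightarrow> (nat \<times> 'a option \<times> nat \<times> 'g) set
     \<Rightarrow> nat \<Rightarrow> nat set \<Rightarrow> bool" where
  "is_gaut G \<Sigma> Q \<Delta> q0 Qa \<longleftrightarrow> finite \<Sigma> \<and> finite Q \<and> q0 \<in> Q \<and> Qa \<subseteq> Q \<and> finite \<Delta> \<and>
     (\<forall>(q,s,q',m)\<in>\<Delta>. q \<in> Q \<and> q' \<in> Q \<and> set_option s \<subseteq> \<Sigma> \<and> m \<in> carrier G)"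

text \<open>Reachable configurations (state, word read so far, register content) from the
  initial configuration (q0, [], e).\<close>
inductive_set gaut_reach ::
  "('g,'x) monoid_scheme \<Rightarrow> (nat \<times> 'a option \<times> nat \<times> 'g) set \<Rightarrow> nat
     \<Rightarrow> (nat \<times> 'a list \<times> 'g) set"
  for G \<Delta> q0 where
  init: "(q0, [], \<one>\<^bsub>G\<^esub>) \<in> gaut_reach G \<Delta> q0"
| step: "(q, w, x) \<in> gaut_reach G \<Delta> q0 \<Longrightarrow> (q, s, q', m) \<in> \<Delta> \<Longrightarrow>
         (q', w @ (case s of None \<Rightarrow> [] | Some a \<Rightarrow> [a]), x \<otimes>\<^bsub>G\<^esub> m) \<in> gaut_reach G \<Delta> q0"

definition gaut_lang ::
  "('g,'x) monoid_scheme \<Rightarrow> (nat \<times> 'a option \<times> nat \<times> 'g) set \<Rightarrow> nat \<Rightarrow> nat set \<Rightarrow> 'a list set" where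
  "gaut_lang G \<Delta> q0 Qa = {w. \<exists>q\<in>Qa. (q, w, \<one>\<^bsub>G\<^esub>) \<in> gaut_reach G \<Delta> q0}"

definition lang_class :: "('g,'x) monoid_scheme \<Rightarrow> 'a set \<Rightarrow> 'a list set set" where
  "lang_class G \<Sigma> = {L. \<exists>Q \<Delta> q0 Qa. is_gaut G \<Sigma> Q \<Delta> q0 Qa \<and> L = gaut_lang G \<Delta> q0 Qa}"

end

(* The inclusion comes from the embedding SL(2,Z) -> SL(2,Q). For strictness, {0^n 1^n 2^n} is
   recognised over SL(2,Q) using diagonal matrices, whereas every SL(2,Z)-language satisfies a
   pumping lemma of context-free type.

   The pumping lemma rests on PSL(2,Z) = Z/2 * Z/3, generated by S and U. Writing the prefix products
   of an accepting run as reduced words in S and U, each transition changes only a bounded top part of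
   the word, so these normal forms behave like the stack of a pushdown automaton. The run returns to the
   identity, so the stack starts and ends empty, and a pigeonhole argument over nested excursions of the
   stack height gives positions s1 < s2 <= t2 <= t1 with equal states, equal signs and stacks
   u1 v1, u1 v2, u2 v1, u2 v2. Then g(s1)^-1 g(t1) = g(s2)^-1 g(t2) for the prefix products g, which
   says that the segments s1..s2 and t2..t1 of the run can be deleted or doubled together without
   changing the product. *)

theory Submission
  imports Defs
begin

section \<open>Stack walks\<close>

definition stack_step :: "nat \<Rightarrow> 'a list \<Rightarrow> 'a list \<Rightarrow> bool" where
  "stack_step C w w' \<longleftrightarrow> (\<exists>k v. k \<le> C \<and> length v \<le> C \<and> w' = take (length w - k) w @ v)"

definition stack_walk :: "nat \<Rightarrow> (nat \<Rightarrow> 'a list) \<Rightarrow> nat \<Rightarrow> bool" where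
  "stack_walk C P N \<longleftrightarrow> (\<forall>i<N. stack_step C (P i) (P (Suc i)))"

lemma stack_step_refl: "stack_step C w w"
  unfolding stack_step_def by (intro exI[of _ 0] exI[of _ "[]"]) simp

lemma stack_step_mono: "stack_step C w w' \<Longrightarrow> C \<le> C' \<Longrightarrow> stack_step C' w w'"
  unfolding stack_step_def by (blast intro: le_trans)

lemma stack_step_trans:
  assumes "stack_step C w w'" "stack_step C' w' w''"
  shows "stack_step (C + C') w w''"
proof -
  obtain k v where kv: "k \<le> C" "length v \<le> C" "w' = take (length w - k) w @ v"
    using assms(1) unfolding stack_step_def by blast
  obtain k' v' where kv': "k' \<le> C'" "length v' \<le> C'" "w'' = take (length w' - k') w' @ v'"
    using assms(2) unfolding stack_step_def by blast
  show ?thesis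
  proof (cases "k' \<le> length v")
    case True
    then have "w'' = take (length w - k) w @ (take (length v - k') v @ v')"
      using kv(3) kv'(3) by simp
    then show ?thesis
      unfolding stack_step_def using kv kv' by (intro exI[of _ k] exI[of _ "take (length v - k') v @ v'"]) auto
  next
    case False
    have "length w' - k' = length w - (k + (k' - length v))"
      using kv(3) False by auto
    then have "w'' = take (length w - (k + (k' - length v))) w @ v'"
      using kv(3) kv'(3) by simp
    then show ?thesis
      unfolding stack_step_def using kv kv' False by (intro exI[of _ "k + (k' - length v)"] exI[of _ v']) auto
  qed
qed

lemma stack_step_length: "stack_step C w w' \<Longrightarrow> length w' \<le> length w + C"
  unfolding stack_step_def by auto

lemma stack_step_snoc: "stack_step 1 w (w @ [x])"
  unfolding stack_step_def by (intro exI[of _ 0] exI[of _ "[x]"]) simp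

lemma stack_step_replace_last: "length v \<le> 1 \<Longrightarrow> stack_step 1 (w @ [a]) (w @ v)"
  unfolding stack_step_def by (intro exI[of _ 1] exI[of _ v]) simp

lemma stack_step_take: "stack_step C w w' \<Longrightarrow> m + C \<le> length w \<Longrightarrow> take m w' = take m w"
  unfolding stack_step_def by (auto simp add: take_append min_def)

lemma stack_walk_take:
  assumes walk: "stack_walk C P N" and "t \<le> N"
    and high: "\<And>i. s \<le> i \<Longrightarrow> i < t \<Longrightarrow> m + C \<le> length (P i)"
  shows "s \<le> t \<Longrightarrow> take m (P t) = take m (P s)"
  using \<open>t \<le> N\<close> high
proof (induction t)
  case (Suc t)
  show ?case
  proof (cases "s = Suc t")
    case False
    then have "take m (P (Suc t)) = take m (P t)"
      using walk Suc.prems unfolding stack_walk_def by (intro stack_step_take[of C]) auto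
    then show ?thesis using Suc False by simp
  qed simp
qed simp

definition excursion :: "(nat \<Rightarrow> 'a list) \<Rightarrow> nat \<Rightarrow> nat \<Rightarrow> nat \<Rightarrow> bool" where
  "excursion P l s t \<longleftrightarrow> Suc s < t \<and> length (P s) \<le> l \<and> length (P t) \<le> l \<and>
     (\<forall>i. s < i \<and> i < t \<longrightarrow> l < length (P i))"

lemma last_before:
  fixes Q :: "nat \<Rightarrow> bool"
  shows "Q 0 \<Longrightarrow> \<not> Q n \<Longrightarrow> \<exists>s<n. Q s \<and> (\<forall>i. s < i \<and> i \<le> n \<longrightarrow> \<not> Q i)"
proof (induction n)
  case (Suc n)
  show ?case
  proof (cases "Q n")
    case False
    then obtain s where "s < n" "Q s" "\<forall>i. s < i \<and> i \<le> n \<longrightarrow> \<not> Q i" using Suc by blast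
    then show ?thesis using Suc.prems by (intro exI[of _ s]) (auto simp add: le_Suc_eq)
  qed (use Suc.prems in \<open>auto simp add: le_Suc_eq\<close>)
qed simp

lemma first_after:
  fixes Q :: "nat \<Rightarrow> bool"
  assumes "Q N" "\<not> Q n" "n \<le> N"
  shows "\<exists>t. n < t \<and> t \<le> N \<and> Q t \<and> (\<forall>i. n \<le> i \<and> i < t \<longrightarrow> \<not> Q i)"
proof -
  define t where "t = (LEAST t. n \<le> t \<and> Q t)"
  have t: "n \<le> t \<and> Q t" unfolding t_def by (rule LeastI[of _ N]) (use assms in simp)
  have "t \<le> N" unfolding t_def by (rule Least_le) (use assms in simp)
  moreover have "\<not> Q i" if "n \<le> i" "i < t" for i
    using not_less_Least[of i] that unfolding t_def by blast
  ultimately show ?thesis using t assms(2) by (intro exI[of _ t]) (auto simp add: le_less)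
qed

lemma excursion_around:
  assumes "P 0 = []" "P N = []" "i0 \<le> N" "l < length (P i0)"
  obtains s t where "s < i0" "i0 < t" "t \<le> N" "excursion P l s t"
proof -
  obtain s where s: "s < i0" "length (P s) \<le> l" "\<forall>i. s < i \<and> i \<le> i0 \<longrightarrow> l < length (P i)"
    using last_before[of "\<lambda>i. length (P i) \<le> l" i0] assms by (auto simp add: not_le)
  obtain t where t: "i0 < t" "t \<le> N" "length (P t) \<le> l" "\<forall>i. i0 \<le> i \<and> i < t \<longrightarrow> l < length (P i)"
    using first_after[of "\<lambda>i. length (P i) \<le> l" N i0] assms by (auto simp add: not_le)
  have "l < length (P i)" if "s < i" "i < t" for i
    using s(3) t(4) that by (cases "i \<le> i0") auto
  then have "excursion P l s t"
    unfolding excursion_def using s t by auto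
  then show thesis using that s t by blast
qed

lemma excursion_nested:
  assumes "excursion P l s t" "excursion P l' s' t'" "l \<le> l'"
    and "s < i0" "i0 < t" "s' < i0" "i0 < t'"
  shows "s \<le> s' \<and> t' \<le> t"
  using assms unfolding excursion_def by (meson le_less_trans less_trans not_le)

lemma excursion_start_length:
  assumes "stack_walk C P N" "t \<le> N" "excursion P l s t"
  shows "l < length (P s) + C"
proof -
  have "l < length (P (Suc s))" "s < N" using assms(2,3) unfolding excursion_def by auto
  then show ?thesis using assms(1) stack_step_length unfolding stack_walk_def by fastforce
qed

lemma excursion_take:
  assumes walk: "stack_walk C P N" and "t \<le> N" and exc: "excursion P l s t"
  shows "take (l - 2*C) (P t) = take (l - 2*C) (P s)"
proof (cases "2*C \<le> l")
  case True
  have "l - 2*C + C \<le> length (P i)" if "s \<le> i" "i < t" for i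
  proof (cases "i = s")
    case False
    then have "l < length (P i)" using that exc unfolding excursion_def by simp
    then show ?thesis using True by arith
  qed (use excursion_start_length[OF walk \<open>t \<le> N\<close> exc] True in arith)
  then show ?thesis using stack_walk_take[OF walk \<open>t \<le> N\<close>] exc unfolding excursion_def by simp
qed simp

text \<open>The stacks at \<open>s2\<close> and \<open>t2\<close> arise from those at \<open>s1\<close> and \<open>t1\<close> by exchanging the common
  bottom \<open>u1\<close> for \<open>u2\<close>; for stacks of normal forms this makes \<open>g(s1)\<inverse> g(t1) = g(s2)\<inverse> g(t2)\<close>.\<close>

definition nested_repetition :: "(nat \<Rightarrow> 'a list) \<Rightarrow> (nat \<Rightarrow> 'c) \<Rightarrow> nat \<Rightarrow> bool" where
  "nested_repetition P f N \<longleftrightarrow> (\<exists>s1 s2 t2 t1 u1 u2 v1 v2.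
     s1 < s2 \<and> s2 \<le> t2 \<and> t2 \<le> t1 \<and> t1 \<le> N \<and> f s1 = f s2 \<and> f t2 = f t1 \<and>
     P s1 = u1 @ v1 \<and> P t1 = u1 @ v2 \<and> P s2 = u2 @ v1 \<and> P t2 = u2 @ v2)"

lemma pigeonhole_nat:
  assumes "finite A" "\<forall>i\<le>n. f i \<in> A" "card A \<le> n"
  shows "\<exists>i j. i < j \<and> j \<le> n \<and> f i = f j"
proof -
  have "card (f ` {..n}) \<le> card A" using assms(1,2) by (intro card_mono) auto
  then have "\<not> inj_on f {..n}" using assms(3) by (intro pigeonhole) simp
  then obtain i j where "i \<le> n" "j \<le> n" "i \<noteq> j" "f i = f j" unfolding inj_on_def by auto
  then show ?thesis by (metis linorder_neqE_nat)
qed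

lemma finite_lists_length_le_UNIV: "finite {w :: 'a::finite list. length w \<le> n}"
  using finite_lists_length_le[of "UNIV :: 'a set" n] by simp

lemma nested_repetition_low:
  fixes P :: "nat \<Rightarrow> 'a::finite list"
  assumes "finite F" "\<forall>i\<le>N. f i \<in> F" "\<forall>i\<le>N. length (P i) \<le> H"
    and "card (F \<times> {w :: 'a list. length w \<le> H}) \<le> N"
  shows "nested_repetition P f N"
proof -
  have "finite (F \<times> {w :: 'a list. length w \<le> H})"
    using assms(1) finite_lists_length_le_UNIV by blast
  moreover have "\<forall>i\<le>N. (f i, P i) \<in> F \<times> {w. length w \<le> H}" using assms(2,3) by auto
  ultimately obtain i j where "i < j" "j \<le> N" "(f i, P i) = (f j, P j)"
    using pigeonhole_nat[of _ N "\<lambda>i. (f i, P i)"] assms(4) by blast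
  then show ?thesis unfolding nested_repetition_def
    by (intro exI[of _ i] exI[of _ j] exI[of _ j] exI[of _ j] exI[of _ "P j"] exI[of _ "P j"]
        exI[of _ "[]"]) simp
qed

lemma excursions_nested_repetition:
  assumes walk: "stack_walk C P N"
    and exc: "excursion P l s t" "excursion P l' s' t'" and sep: "l + C < l'"
    and pos: "s < i0" "i0 < t" "s' < i0" "i0 < t'" "t \<le> N" "t' \<le> N"
    and f: "f s = f s'" "f t' = f t"
    and drops: "drop (l' - 2*C) (P s') = drop (l - 2*C) (P s)"
      "drop (l' - 2*C) (P t') = drop (l - 2*C) (P t)"
  shows "nested_repetition P f N"
proof -
  have "s \<le> s'" "t' \<le> t"
    using excursion_nested[OF exc] sep pos by simp_all
  moreover have "s \<noteq> s'"
    using excursion_start_length[OF walk pos(6) exc(2)] exc(1) sep unfolding excursion_def by auto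
  ultimately have order: "s < s'" "s' \<le> t'" "t' \<le> t" "t \<le> N"
    using pos by auto
  have "take (l - 2*C) (P t) = take (l - 2*C) (P s)" "take (l' - 2*C) (P t') = take (l' - 2*C) (P s')"
    using excursion_take[OF walk] exc pos by auto
  then have "P s = take (l - 2*C) (P s) @ drop (l - 2*C) (P s)"
    "P t = take (l - 2*C) (P s) @ drop (l - 2*C) (P t)"
    "P s' = take (l' - 2*C) (P s') @ drop (l - 2*C) (P s)"
    "P t' = take (l' - 2*C) (P s') @ drop (l - 2*C) (P t)"
    using append_take_drop_id drops by metis+
  then show ?thesis unfolding nested_repetition_def using order f by blast
qed

text \<open>Pigeonhole over the excursions at the levels \<open>2C + j(C + 1)\<close>: above level \<open>l\<close> the bottom
  \<open>l - 2C\<close> letters stay fixed, so only the top \<open>2C\<close> letters of the stacks at both ends matter.\<close>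

lemma nested_repetition_high:
  fixes P :: "nat \<Rightarrow> 'a::finite list" and F :: "'c set" and C :: nat
  defines "K \<equiv> F \<times> F \<times> {w :: 'a list. length w \<le> 2*C} \<times> {w :: 'a list. length w \<le> 2*C}"
  assumes walk: "stack_walk C P N" and ends: "P 0 = []" "P N = []"
    and F: "finite F" "\<forall>i\<le>N. f i \<in> F"
    and peak: "i0 \<le> N" "2*C + card K * (C+1) < length (P i0)"
  shows "nested_repetition P f N"
proof -
  define level where "level j = 2*C + j * (C+1)" for j
  have "\<exists>s t. s < i0 \<and> i0 < t \<and> t \<le> N \<and> excursion P (level j) s t" if "j \<le> card K" for j
  proof -
    have "level j \<le> 2*C + card K * (C+1)"
      unfolding level_def using mult_le_mono1[OF that, of "C+1"] by simp
    then show ?thesis using excursion_around[OF ends peak(1), of "level j"] peak(2) by force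
  qed
  then obtain s t where st: "\<And>j. j \<le> card K \<Longrightarrow>
      s j < i0 \<and> i0 < t j \<and> t j \<le> N \<and> excursion P (level j) (s j) (t j)"
    by metis
  define key where "key j = (f (s j), f (t j), drop (level j - 2*C) (P (s j)), drop (level j - 2*C) (P (t j)))"
    for j
  have "key j \<in> K" if "j \<le> card K" for j
  proof -
    have "length (P (s j)) \<le> level j" "length (P (t j)) \<le> level j" "s j \<le> N" "t j \<le> N"
      using st[OF that] unfolding excursion_def by auto
    then show ?thesis using F(2) unfolding key_def K_def level_def by auto
  qed
  moreover have "finite K"
    unfolding K_def by (intro finite_cartesian_product F(1) finite_lists_length_le_UNIV)
  ultimately obtain j j' where jj: "j < j'" "j' \<le> card K" "key j = key j'"
    using pigeonhole_nat[of K "card K" key] by auto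
  have "level j + C < level j'"
    using mult_le_mono1[of "Suc j" j' "C+1"] jj(1) unfolding level_def by simp
  moreover have "f (s j) = f (s j')" "f (t j') = f (t j)"
    "drop (level j' - 2*C) (P (s j')) = drop (level j - 2*C) (P (s j))"
    "drop (level j' - 2*C) (P (t j')) = drop (level j - 2*C) (P (t j))"
    using jj(3) unfolding key_def by auto
  moreover have "j \<le> card K" using jj by simp
  ultimately show ?thesis
    using st[of j] st[of j'] jj(2)
    by (intro excursions_nested_repetition[OF walk, of "level j" "s j" "t j" "level j'" "s j'" "t j'" i0])
       auto
qed

lemma stack_walk_pumping:
  fixes F :: "'c set"
  assumes "finite F"
  obtains B where "\<And>N (P :: nat \<Rightarrow> 'a::finite list) f. stack_walk C P N \<Longrightarrow> P 0 = [] \<Longrightarrow> P N = [] \<Longrightarrow>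
    \<forall>i\<le>N. f i \<in> F \<Longrightarrow> B < N \<Longrightarrow> nested_repetition P f N"
proof -
  define H where
    "H = 2*C + card (F \<times> F \<times> {w :: 'a list. length w \<le> 2*C} \<times> {w :: 'a list. length w \<le> 2*C}) * (C+1)"
  show thesis
  proof (rule that[of "card (F \<times> {w :: 'a list. length w \<le> H})"])
    fix N and P :: "nat \<Rightarrow> 'a list" and f :: "nat \<Rightarrow> 'c"
    assume walk: "stack_walk C P N" and ends: "P 0 = []" "P N = []" and f: "\<forall>i\<le>N. f i \<in> F"
      and big: "card (F \<times> {w :: 'a list. length w \<le> H}) < N"
    show "nested_repetition P f N"
    proof (cases "\<forall>i\<le>N. length (P i) \<le> H")
      case True
      then show ?thesis using nested_repetition_low[OF assms f True] big by simp
    next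
      case False
      then obtain i0 where "i0 \<le> N" "H < length (P i0)" by (auto simp add: not_le)
      then show ?thesis using nested_repetition_high[OF walk ends assms f] unfolding H_def by blast
    qed
  qed
qed

section \<open>Two-by-two matrices\<close>

type_synonym 'r mat22 = "'r \<times> 'r \<times> 'r \<times> 'r"

fun mat_mult :: "'r::comm_ring_1 mat22 \<Rightarrow> 'r mat22 \<Rightarrow> 'r mat22" (infixl "\<cdot>" 70) where
  "(a, b, c, d) \<cdot> (e, f, g, h) = (a*e + b*g, a*f + b*h, c*e + d*g, c*f + d*h)"

abbreviation mat_one :: "'r::comm_ring_1 mat22" where
  "mat_one \<equiv> (1, 0, 0, 1)"

fun mat_det :: "'r::comm_ring_1 mat22 \<Rightarrow> 'r" where
  "mat_det (a, b, c, d) = a*d - b*c"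

fun mat_neg :: "'r::comm_ring_1 mat22 \<Rightarrow> 'r mat22" where
  "mat_neg (a, b, c, d) = (-a, -b, -c, -d)"

fun mat_adj :: "'r::comm_ring_1 mat22 \<Rightarrow> 'r mat22" where
  "mat_adj (a, b, c, d) = (d, -b, -c, a)"

fun mat_apply :: "'r::comm_ring_1 mat22 \<Rightarrow> 'r \<times> 'r \<Rightarrow> 'r \<times> 'r" where
  "mat_apply (a, b, c, d) (x, y) = (a*x + b*y, c*x + d*y)"

fun mat_prod :: "'r::comm_ring_1 mat22 list \<Rightarrow> 'r mat22" where
  "mat_prod [] = mat_one"
| "mat_prod (m # ms) = m \<cdot> mat_prod ms"

lemma mult_SL2: "x \<otimes>\<^bsub>SL2\<^esub> y = x \<cdot> y"
  by (cases x; cases y) (simp add: SL2_def)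

lemma one_SL2: "\<one>\<^bsub>SL2\<^esub> = mat_one"
  by (simp add: SL2_def)

lemma carrier_SL2: "x \<in> carrier SL2 \<longleftrightarrow> mat_det x = 1"
  by (cases x) (simp add: SL2_def)

lemma mat_mult_assoc: "x \<cdot> y \<cdot> z = x \<cdot> (y \<cdot> z)"
  by (cases x; cases y; cases z) (simp add: algebra_simps)

lemma mat_mult_one [simp]: "mat_one \<cdot> x = x" "x \<cdot> mat_one = x"
  by (cases x; simp)+

lemma mat_det_mult: "mat_det (x \<cdot> y) = mat_det x * mat_det y"
  by (cases x; cases y) (simp add: algebra_simps)

lemma mat_neg_neg [simp]: "mat_neg (mat_neg x) = x"
  by (cases x) simp

lemma mat_neg_inject [simp]: "mat_neg x = mat_neg y \<longleftrightarrow> x = y"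
  by (metis mat_neg_neg)

lemma mat_mult_neg [simp]: "mat_neg x \<cdot> y = mat_neg (x \<cdot> y)" "x \<cdot> mat_neg y = mat_neg (x \<cdot> y)"
  by (cases x; cases y; simp)+

lemma mat_prod_append: "mat_prod (ms @ ns) = mat_prod ms \<cdot> mat_prod ns"
  by (induction ms) (simp_all add: mat_mult_assoc)

lemma mat_det_prod: "\<forall>m\<in>set ms. mat_det m = 1 \<Longrightarrow> mat_det (mat_prod ms) = 1"
  by (induction ms) (simp_all add: mat_det_mult)

lemma mat_adj_mult_self: "mat_det x = 1 \<Longrightarrow> mat_adj x \<cdot> x = mat_one"
  by (cases x) (simp add: algebra_simps)

lemma mat_adj_mult: "mat_adj (x \<cdot> y) = mat_adj y \<cdot> mat_adj x"
  by (cases x; cases y) (simp add: algebra_simps)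

lemma mat_adj_neg: "mat_adj (mat_neg x) = mat_neg (mat_adj x)"
  by (cases x) simp

lemma mat_apply_mult: "mat_apply (x \<cdot> y) v = mat_apply x (mat_apply y v)"
  by (cases x; cases y; cases v) (simp add: algebra_simps)

definition psl_eq :: "'r::comm_ring_1 mat22 \<Rightarrow> 'r mat22 \<Rightarrow> bool" where
  "psl_eq x y \<longleftrightarrow> x = y \<or> x = mat_neg y"

lemma psl_eq_refl [simp]: "psl_eq x x"
  by (simp add: psl_eq_def)

lemma psl_eq_sym: "psl_eq x y \<Longrightarrow> psl_eq y x"
  by (auto simp add: psl_eq_def)

lemma psl_eq_trans: "psl_eq x y \<Longrightarrow> psl_eq y z \<Longrightarrow> psl_eq x z"
  by (auto simp add: psl_eq_def)

lemma psl_eq_neg [simp]: "psl_eq x (mat_neg y) \<longleftrightarrow> psl_eq x y" "psl_eq (mat_neg x) y \<longleftrightarrow> psl_eq x y"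
  by (auto simp add: psl_eq_def)

lemma psl_eq_mult: "psl_eq x y \<Longrightarrow> psl_eq z w \<Longrightarrow> psl_eq (x \<cdot> z) (y \<cdot> w)"
  by (auto simp add: psl_eq_def)

definition sign_mat :: "bool \<Rightarrow> 'r::comm_ring_1 mat22 \<Rightarrow> 'r mat22" where
  "sign_mat b x = (if b then x else mat_neg x)"

lemma psl_eq_sign_mat: "psl_eq x y \<Longrightarrow> x = sign_mat (x = y) y"
  by (auto simp add: psl_eq_def sign_mat_def)

lemma mat_adj_sign_mat_mult: "mat_adj (sign_mat b x) \<cdot> sign_mat c y = sign_mat (b = c) (mat_adj x \<cdot> y)"
  by (cases b; cases c) (simp_all add: sign_mat_def mat_adj_neg)

lemma mat_adj_prefix_cancel:
  assumes "mat_det a = 1" "mat_det b = 1"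
    and "mat_adj a \<cdot> (a \<cdot> b \<cdot> c \<cdot> d) = mat_adj (a \<cdot> b) \<cdot> (a \<cdot> b \<cdot> c)"
  shows "b \<cdot> c \<cdot> d = c"
proof -
  have "mat_adj a \<cdot> (a \<cdot> b \<cdot> c \<cdot> d) = b \<cdot> c \<cdot> d"
    using mat_adj_mult_self[OF assms(1)] by (simp add: mat_mult_assoc flip: mat_mult_assoc[of "mat_adj a"])
  moreover have "mat_adj (a \<cdot> b) \<cdot> (a \<cdot> b \<cdot> c) = c"
    using mat_adj_mult_self[of "a \<cdot> b"] assms(1,2)
    by (simp add: mat_det_mult flip: mat_mult_assoc[of "mat_adj (a \<cdot> b)"])
  ultimately show ?thesis using assms(3) by simp
qed

lemma split_at_indices:
  assumes "s1 \<le> s2" "s2 \<le> t2" "t2 \<le> t1" "t1 \<le> length xs"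
  obtains a b c d e where "xs = a @ b @ c @ d @ e" "length a = s1" "length (a @ b) = s2"
    "length (a @ b @ c) = t2" "length (a @ b @ c @ d) = t1"
proof
  show "xs = take s1 xs @ take (s2 - s1) (drop s1 xs) @ take (t2 - s2) (drop s2 xs) @
      take (t1 - t2) (drop t2 xs) @ drop t1 xs"
    using assms by (metis append_take_drop_id le_add_diff_inverse take_add append.assoc)
qed (use assms in auto)

lemma mat_prod_prefix_cancel:
  fixes \<mu> :: "'t \<Rightarrow> 'r::comm_ring_1 mat22"
  assumes "\<forall>t\<in>set ts. mat_det (\<mu> t) = 1" "s1 \<le> s2" "s2 \<le> t2" "t2 \<le> t1" "t1 \<le> length ts"
    and "mat_adj (mat_prod (map \<mu> (take s1 ts))) \<cdot> mat_prod (map \<mu> (take t1 ts)) =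
      mat_adj (mat_prod (map \<mu> (take s2 ts))) \<cdot> mat_prod (map \<mu> (take t2 ts))"
  obtains a b c d e where "ts = a @ b @ c @ d @ e" "length a = s1" "length (a @ b) = s2"
    "length (a @ b @ c) = t2" "length (a @ b @ c @ d) = t1"
    "mat_prod (map \<mu> b) \<cdot> mat_prod (map \<mu> c) \<cdot> mat_prod (map \<mu> d) = mat_prod (map \<mu> c)"
proof -
  obtain a b c d e where split: "ts = a @ b @ c @ d @ e" and lengths: "length a = s1"
    "length (a @ b) = s2" "length (a @ b @ c) = t2" "length (a @ b @ c @ d) = t1"
    by (rule split_at_indices[OF assms(2-5)])
  have "mat_det m = 1" if "m \<in> set (map \<mu> ts)" for m
    using that assms(1) by auto
  then have dets: "mat_det (mat_prod (map \<mu> a)) = 1" "mat_det (mat_prod (map \<mu> b)) = 1"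
    unfolding split by (simp_all add: mat_det_prod)
  have "mat_prod (map \<mu> (take s1 ts)) = mat_prod (map \<mu> a)"
    "mat_prod (map \<mu> (take s2 ts)) = mat_prod (map \<mu> a) \<cdot> mat_prod (map \<mu> b)"
    "mat_prod (map \<mu> (take t2 ts)) = mat_prod (map \<mu> a) \<cdot> mat_prod (map \<mu> b) \<cdot> mat_prod (map \<mu> c)"
    "mat_prod (map \<mu> (take t1 ts)) =
      mat_prod (map \<mu> a) \<cdot> mat_prod (map \<mu> b) \<cdot> mat_prod (map \<mu> c) \<cdot> mat_prod (map \<mu> d)"
    unfolding split lengths[symmetric] by (simp_all add: mat_prod_append mat_mult_assoc)
  then have "mat_prod (map \<mu> b) \<cdot> mat_prod (map \<mu> c) \<cdot> mat_prod (map \<mu> d) = mat_prod (map \<mu> c)"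
    using mat_adj_prefix_cancel[OF dets] assms(6) by simp
  then show thesis using that split lengths by blast
qed

lemma mat_prod_pump:
  assumes "mat_prod b \<cdot> mat_prod c \<cdot> mat_prod d = mat_prod c"
  shows "mat_prod (a @ c @ e) = mat_prod (a @ b @ c @ d @ e)"
    "mat_prod (a @ b @ b @ c @ d @ d @ e) = mat_prod (a @ b @ c @ d @ e)"
proof -
  have "mat_prod b \<cdot> (mat_prod c \<cdot> (mat_prod d \<cdot> x)) = mat_prod c \<cdot> x" for x
    using assms by (simp flip: mat_mult_assoc)
  then show "mat_prod (a @ c @ e) = mat_prod (a @ b @ c @ d @ e)"
    "mat_prod (a @ b @ b @ c @ d @ d @ e) = mat_prod (a @ b @ c @ d @ e)"
    by (simp_all add: mat_prod_append mat_mult_assoc)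
qed

section \<open>The modular group\<close>

text \<open>\<open>S\<close> and \<open>U\<close> generate \<open>PSL(2,\<int>) \<cong> \<int>/2 * \<int>/3\<close>, with \<open>S\<^sup>2 = U\<^sup>3 = -1\<close> and \<open>U2 = U\<^sup>2\<close>.
  Its normal forms are the reduced words, which alternate between \<open>S\<close> and a power of \<open>U\<close>.\<close>

datatype gen = S | U | U2

lemma UNIV_gen: "(UNIV :: gen set) = {S, U, U2}"
  using gen.exhaust by auto

instance gen :: finite
  by standard (simp add: UNIV_gen)

fun gen_mat :: "gen \<Rightarrow> int mat22" where
  "gen_mat S = (0, -1, 1, 0)"
| "gen_mat U = (1, -1, 1, 0)"
| "gen_mat U2 = (0, -1, 1, -1)"

definition word_mat :: "gen list \<Rightarrow> int mat22" where
  "word_mat w = mat_prod (map gen_mat w)"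

lemma word_mat_simps [simp]: "word_mat [] = mat_one" "word_mat (x # w) = gen_mat x \<cdot> word_mat w"
  by (simp_all add: word_mat_def)

lemma word_mat_append: "word_mat (v @ w) = word_mat v \<cdot> word_mat w"
  by (simp add: word_mat_def mat_prod_append)

lemma mat_det_word_mat: "mat_det (word_mat w) = 1"
proof -
  have "mat_det (gen_mat x) = 1" for x by (cases x) simp_all
  then show ?thesis unfolding word_mat_def by (simp add: mat_det_prod)
qed

fun reduced :: "gen list \<Rightarrow> bool" where
  "reduced (x # y # w) \<longleftrightarrow> (x = S) \<noteq> (y = S) \<and> reduced (y # w)"
| "reduced _ \<longleftrightarrow> True"

lemma reduced_Cons: "reduced (x # w) \<longleftrightarrow> reduced w \<and> (w \<noteq> [] \<longrightarrow> (x = S) \<noteq> (hd w = S))"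
  by (cases w) auto

lemma reduced_append:
  "reduced (v @ w) \<longleftrightarrow> reduced v \<and> reduced w \<and> (v \<noteq> [] \<and> w \<noteq> [] \<longrightarrow> (last v = S) \<noteq> (hd w = S))"
  by (induction v) (auto simp add: reduced_Cons)

text \<open>Ping-pong: \<open>S\<close> maps the open quadrants \<open>xy > 0\<close> into \<open>xy < 0\<close>, the powers of \<open>U\<close> map
  \<open>xy < 0\<close> into \<open>xy > 0\<close> and off the diagonals \<open>|x| = |y|\<close>.\<close>

definition sector :: "bool \<Rightarrow> int \<times> int \<Rightarrow> bool" where
  "sector b v \<longleftrightarrow> (if b then 0 < fst v * snd v else fst v * snd v < 0)"

definition off_diagonal :: "int \<times> int \<Rightarrow> bool" where
  "off_diagonal v \<longleftrightarrow> \<bar>fst v\<bar> \<noteq> \<bar>snd v\<bar>"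

lemma gen_mat_sector:
  assumes "sector (x = S) v"
  shows "sector (x \<noteq> S) (mat_apply (gen_mat x) v) \<and>
    (x \<noteq> S \<or> off_diagonal v \<longrightarrow> off_diagonal (mat_apply (gen_mat x) v))"
proof -
  obtain a b where v: "v = (a, b)" by (cases v)
  show ?thesis
  proof (cases x)
    case S
    then show ?thesis using assms v by (auto simp add: sector_def off_diagonal_def algebra_simps)
  next
    case U
    then have "(0 < a \<and> b < 0) \<or> (a < 0 \<and> 0 < b)"
      using assms v by (auto simp add: sector_def mult_less_0_iff)
    then show ?thesis using U v by (auto simp add: sector_def off_diagonal_def zero_less_mult_iff)
  next
    case U2
    then have "(0 < a \<and> b < 0) \<or> (a < 0 \<and> 0 < b)"
      using assms v by (auto simp add: sector_def mult_less_0_iff)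
    moreover from this have "b * (a - b) < 0" by (auto simp add: mult_less_0_iff)
    ultimately show ?thesis using U2 v by (auto simp add: sector_def off_diagonal_def zero_less_mult_iff)
  qed
qed

lemma word_mat_sector:
  assumes "reduced w" "w \<noteq> []" "sector (last w = S) v"
  shows "sector (hd w \<noteq> S) (mat_apply (word_mat w) v) \<and>
    ((\<exists>x\<in>set w. x \<noteq> S) \<or> off_diagonal v \<longrightarrow> off_diagonal (mat_apply (word_mat w) v))"
  using assms
proof (induction w)
  case (Cons x w)
  show ?case
  proof (cases "w = []")
    case True
    then show ?thesis using Cons.prems gen_mat_sector[of x v] by simp
  next
    case False
    then have "sector (x = S) (mat_apply (word_mat w) v)"
      and "(\<exists>y\<in>set w. y \<noteq> S) \<or> off_diagonal v \<longrightarrow> off_diagonal (mat_apply (word_mat w) v)"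
      using Cons by (auto simp add: reduced_Cons)
    then show ?thesis
      using gen_mat_sector[of x "mat_apply (word_mat w) v"] by (auto simp add: mat_apply_mult)
  qed
qed simp

lemma reduced_word_mat_not_one:
  assumes "reduced w" "w \<noteq> []"
  shows "\<not> psl_eq (word_mat w) mat_one"
proof
  assume "psl_eq (word_mat w) mat_one"
  then have fix_pm: "mat_apply (word_mat w) v = v \<or> mat_apply (word_mat w) v = (- fst v, - snd v)" for v
    by (cases v) (auto simp add: psl_eq_def)
  define v :: "int \<times> int" where "v = (if last w = S then (1, 1) else (1, -1))"
  define r where "r = mat_apply (word_mat w) v"
  have v: "sector (last w = S) v"
    unfolding v_def sector_def by simp
  have r: "sector b r \<longleftrightarrow> sector b v" "\<not> off_diagonal r" for b
    using fix_pm[of v] unfolding r_def v_def sector_def off_diagonal_def by auto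
  have "sector (hd w \<noteq> S) r" "(\<exists>x\<in>set w. x \<noteq> S) \<longrightarrow> off_diagonal r"
    using word_mat_sector[OF assms v] unfolding r_def by auto
  then have "sector (hd w \<noteq> S) v" "\<forall>x\<in>set w. x = S"
    using r by auto
  then show False
    using v \<open>w \<noteq> []\<close> unfolding sector_def by (auto split: if_splits)
qed

text \<open>\<open>push w x\<close> is the normal form of \<open>w x\<close>: only the last letter of \<open>w\<close> can interact with \<open>x\<close>.\<close>

fun merge :: "gen \<Rightarrow> gen \<Rightarrow> gen list" where
  "merge S S = []"
| "merge U U = [U2]"
| "merge U U2 = []"
| "merge U2 U = []"
| "merge U2 U2 = [U]"
| "merge a x = [a, x]"

definition push :: "gen list \<Rightarrow> gen \<Rightarrow> gen list" where
  "push w x = (if w = [] then [x] else butlast w @ merge (last w) x)"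

lemma word_mat_merge: "psl_eq (word_mat (merge a x)) (gen_mat a \<cdot> gen_mat x)"
  by (cases a; cases x) (simp_all add: psl_eq_def)

lemma reduced_merge: "reduced (w @ [a]) \<Longrightarrow> reduced (w @ merge a x)"
  by (cases a; cases x) (auto simp add: reduced_append)

lemma merge_cases: "merge a x = [] \<or> (\<exists>y. merge a x = [y]) \<or> merge a x = [a, x]"
  by (cases a; cases x) simp_all

lemma stack_step_merge: "stack_step 1 (w @ [a]) (w @ merge a x)"
  using merge_cases[of a x] stack_step_replace_last[of _ w a] stack_step_snoc[of "w @ [a]" x] by force

lemma word_mat_push: "psl_eq (word_mat (push w x)) (word_mat (w @ [x]))"
proof (cases "w = []")
  case False
  then have "w @ [x] = butlast w @ [last w, x]"
    by simp
  then have "word_mat (w @ [x]) = word_mat (butlast w) \<cdot> (gen_mat (last w) \<cdot> gen_mat x)"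
    by (simp only: word_mat_append word_mat_simps mat_mult_one)
  then show ?thesis
    using False psl_eq_mult[OF psl_eq_refl word_mat_merge] by (simp add: push_def word_mat_append)
qed (simp add: push_def)

lemma reduced_push: "reduced w \<Longrightarrow> reduced (push w x)"
  using reduced_merge[of "butlast w" "last w" x] by (simp add: push_def)

lemma stack_step_push: "stack_step 1 w (push w x)"
  using stack_step_merge[of "butlast w" "last w" x] stack_step_snoc[of "[]" x]
  by (cases "w = []") (simp_all add: push_def)

lemma reduced_foldl_push: "reduced w \<Longrightarrow> reduced (foldl push w u)"
  by (induction u arbitrary: w) (simp_all add: reduced_push)

lemma word_mat_foldl_push: "psl_eq (word_mat (foldl push w u)) (word_mat (w @ u))"
proof (induction u arbitrary: w)
  case (Cons x u)
  have "psl_eq (word_mat (push w x @ u)) (word_mat (w @ x # u))"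
    using psl_eq_mult[OF word_mat_push psl_eq_refl] by (simp add: word_mat_append mat_mult_assoc)
  then show ?case using Cons.IH[of "push w x"] psl_eq_trans by simp
qed simp

lemma stack_step_foldl_push: "stack_step (length u) w (foldl push w u)"
proof (induction u arbitrary: w)
  case Nil
  then show ?case by (simp add: stack_step_refl)
next
  case (Cons x u)
  then show ?case using stack_step_trans[OF stack_step_push Cons.IH] by simp
qed

lemma translation_word: "\<exists>w. psl_eq (1, k, 0, 1) (word_mat w)"
proof (induction k rule: int_induct[where k = 0])
  case base
  then show ?case by (intro exI[of _ "[]"]) simp
next
  case (step1 i)
  then obtain w where "psl_eq (1, i, 0, 1) (word_mat w)" by blast
  then have "psl_eq ((1, i, 0, 1) \<cdot> (1, 1, 0, 1)) (word_mat w \<cdot> word_mat [U, S])"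
    by (rule psl_eq_mult) (simp add: psl_eq_def)
  then have "psl_eq (1, i + 1, 0, 1) (word_mat (w @ [U, S]))"
    by (simp add: word_mat_append add.commute)
  then show ?case by blast
next
  case (step2 i)
  then obtain w where "psl_eq (1, i, 0, 1) (word_mat w)" by blast
  then have "psl_eq ((1, i, 0, 1) \<cdot> (1, -1, 0, 1)) (word_mat w \<cdot> word_mat [S, U2])"
    by (rule psl_eq_mult) (simp add: psl_eq_def)
  then have "psl_eq (1, i - 1, 0, 1) (word_mat (w @ [S, U2]))"
    by (simp add: word_mat_append)
  then show ?case by blast
qed

lemma SL2Z_word:
  fixes M :: "int mat22"
  assumes "mat_det M = 1"
  shows "\<exists>w. psl_eq M (word_mat w)"
  using assms
proof (induction "nat \<bar>fst (snd (snd M))\<bar>" arbitrary: M rule: less_induct)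
  case less
  obtain a b c d where M: "M = (a, b, c, d)" by (cases M)
  show ?case
  proof (cases "c = 0")
    case True
    then have "a * d = 1" using less.prems M by simp
    then have "M = (1, b, 0, 1) \<or> M = mat_neg (1, -b, 0, 1)" using M True zmult_eq_1_iff by auto
    then show ?thesis by (metis psl_eq_neg(2) translation_word)
  next
    case False
    text \<open>One step of the Euclidean algorithm on the first column.\<close>
    define k where "k = a div c"
    define r where "r = a mod c"
    define M' where "M' = (-c, -d, r, b - k*d)"
    have "a = k*c + r" unfolding k_def r_def by simp
    then have "mat_det M' = mat_det M" and split: "M = (1, k, 0, 1) \<cdot> gen_mat S \<cdot> mat_neg M'"
      unfolding M M'_def by (simp_all add: algebra_simps)
    moreover have "nat \<bar>r\<bar> < nat \<bar>c\<bar>" using abs_mod_less[OF False, of a] unfolding r_def by simp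
    ultimately obtain w' where "psl_eq M' (word_mat w')"
      using less unfolding M M'_def by force
    moreover obtain wk where "psl_eq (1, k, 0, 1) (word_mat wk)" using translation_word by blast
    ultimately have "psl_eq ((1, k, 0, 1) \<cdot> gen_mat S \<cdot> M') (word_mat wk \<cdot> gen_mat S \<cdot> word_mat w')"
      by (intro psl_eq_mult psl_eq_refl)
    then have "psl_eq M (word_mat wk \<cdot> gen_mat S \<cdot> word_mat w')"
      unfolding split by (simp only: mat_mult_neg psl_eq_neg)
    then have "psl_eq M (word_mat (wk @ S # w'))" by (simp add: word_mat_append mat_mult_assoc)
    then show ?thesis by blast
  qed
qed

lemma mat_adj_word_mat_cancel:
  "mat_adj (word_mat (u @ v)) \<cdot> word_mat (u @ v') = mat_adj (word_mat v) \<cdot> word_mat v'"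
proof -
  have "mat_adj (word_mat (u @ v)) \<cdot> word_mat (u @ v') =
      mat_adj (word_mat v) \<cdot> (mat_adj (word_mat u) \<cdot> word_mat u) \<cdot> word_mat v'"
    by (simp add: word_mat_append mat_adj_mult mat_mult_assoc)
  then show ?thesis by (simp add: mat_adj_mult_self[OF mat_det_word_mat])
qed

lemma nested_repetition_adj_eq:
  assumes "nested_repetition P (\<lambda>i. (f i, E i)) N" "\<And>i. g i = sign_mat (E i) (word_mat (P i))"
  obtains s1 s2 t2 t1 where "s1 < s2" "s2 \<le> t2" "t2 \<le> t1" "t1 \<le> N" "f s1 = f s2" "f t2 = f t1"
    "mat_adj (g s1) \<cdot> g t1 = mat_adj (g s2) \<cdot> g t2"
proof -
  obtain s1 s2 t2 t1 u1 u2 v1 v2 where order: "s1 < s2" "s2 \<le> t2" "t2 \<le> t1" "t1 \<le> N"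
    and col: "f s1 = f s2" "f t2 = f t1" "E s1 = E s2" "E t2 = E t1"
    and stacks: "P s1 = u1 @ v1" "P t1 = u1 @ v2" "P s2 = u2 @ v1" "P t2 = u2 @ v2"
    using assms(1) unfolding nested_repetition_def by auto
  have "mat_adj (g s1) \<cdot> g t1 = mat_adj (g s2) \<cdot> g t2"
    unfolding assms(2) stacks mat_adj_sign_mat_mult mat_adj_word_mat_cancel using col by simp
  then show thesis using that order col by blast
qed

text \<open>Each step appends the generator word of one matrix, and pushing a word of length at most \<open>C\<close>
  changes at most \<open>C\<close> letters at the top of the normal form.\<close>

lemma SL2Z_normal_form_walk:
  fixes \<mu> :: "'t \<Rightarrow> int mat22"
  assumes "finite T" "\<forall>t\<in>T. mat_det (\<mu> t) = 1"
  obtains C where "\<And>ts. set ts \<subseteq> T \<Longrightarrow> \<exists>P. stack_walk C P (length ts) \<and> P 0 = [] \<and>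
      (\<forall>i. reduced (P i) \<and> psl_eq (mat_prod (map \<mu> (take i ts))) (word_mat (P i)))"
proof -
  have "\<forall>t\<in>T. \<exists>w. psl_eq (\<mu> t) (word_mat w)" using SL2Z_word assms(2) by blast
  then obtain gw where gw: "\<forall>t\<in>T. psl_eq (\<mu> t) (word_mat (gw t))" by (metis bchoice)
  define C where "C = Max (insert 0 ((\<lambda>t. length (gw t)) ` T))"
  show thesis
  proof (rule that)
    fix ts assume ts: "set ts \<subseteq> T"
    define P where "P i = foldl push [] (concat (map gw (take i ts)))" for i
    have "stack_walk C P (length ts)"
      unfolding stack_walk_def
    proof (intro allI impI)
      fix i assume i: "i < length ts"
      then have "P (Suc i) = foldl push (P i) (gw (ts ! i))"
        unfolding P_def by (simp add: take_Suc_conv_app_nth)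
      moreover have "length (gw (ts ! i)) \<le> C"
        unfolding C_def using ts nth_mem[OF i] assms(1) by (intro Max_ge) auto
      ultimately show "stack_step C (P i) (P (Suc i))"
        using stack_step_foldl_push stack_step_mono by metis
    qed
    moreover have "reduced (P i)" for i
      unfolding P_def by (rule reduced_foldl_push) simp
    moreover have "psl_eq (mat_prod (map \<mu> (take i ts))) (word_mat (P i))" for i
    proof -
      have "psl_eq (mat_prod (map \<mu> us)) (word_mat (concat (map gw us)))" if "set us \<subseteq> T" for us
        using that gw by (induction us) (auto simp add: word_mat_append psl_eq_mult)
      then have "psl_eq (mat_prod (map \<mu> (take i ts))) (word_mat (concat (map gw (take i ts))))"
        using ts set_take_subset by (metis order_trans)
      then show ?thesis
        using word_mat_foldl_push[of "[]"] psl_eq_sym psl_eq_trans unfolding P_def by (metis append_Nil)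
    qed
    ultimately show "\<exists>P. stack_walk C P (length ts) \<and> P 0 = [] \<and>
        (\<forall>i. reduced (P i) \<and> psl_eq (mat_prod (map \<mu> (take i ts))) (word_mat (P i)))"
      by (intro exI[of _ P]) (simp add: P_def)
  qed
qed

lemma SL2Z_prod_pumping:
  fixes \<mu> :: "'t \<Rightarrow> int mat22" and F :: "'c set"
  assumes "finite T" "\<forall>t\<in>T. mat_det (\<mu> t) = 1" "finite F"
  obtains B where "\<And>ts f. set ts \<subseteq> T \<Longrightarrow> mat_prod (map \<mu> ts) = mat_one \<Longrightarrow>
    \<forall>i\<le>length ts. f i \<in> F \<Longrightarrow> B < length ts \<Longrightarrow>
    \<exists>a b c d e. ts = a @ b @ c @ d @ e \<and> b \<noteq> [] \<and>
      f (length a) = f (length (a @ b)) \<and> f (length (a @ b @ c)) = f (length (a @ b @ c @ d)) \<and>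
      mat_prod (map \<mu> b) \<cdot> mat_prod (map \<mu> c) \<cdot> mat_prod (map \<mu> d) = mat_prod (map \<mu> c)"
proof -
  obtain C where nf: "\<And>ts. set ts \<subseteq> T \<Longrightarrow> \<exists>P. stack_walk C P (length ts) \<and> P 0 = [] \<and>
      (\<forall>i. reduced (P i) \<and> psl_eq (mat_prod (map \<mu> (take i ts))) (word_mat (P i)))"
    using SL2Z_normal_form_walk[OF assms(1,2)] by blast
  obtain B where pump: "\<And>N (P :: nat \<Rightarrow> gen list) f. stack_walk C P N \<Longrightarrow> P 0 = [] \<Longrightarrow> P N = [] \<Longrightarrow>
      \<forall>i\<le>N. f i \<in> F \<times> (UNIV :: bool set) \<Longrightarrow> B < N \<Longrightarrow> nested_repetition P f N"
  proof -
    have "finite (F \<times> (UNIV :: bool set))" using assms(3) by simp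
    from stack_walk_pumping[OF this, of C] show thesis using that by blast
  qed
  show thesis
  proof (rule that)
    fix ts and f :: "nat \<Rightarrow> 'c"
    assume ts: "set ts \<subseteq> T" and one: "mat_prod (map \<mu> ts) = mat_one"
      and f: "\<forall>i\<le>length ts. f i \<in> F" and long: "B < length ts"
    define g where "g i = mat_prod (map \<mu> (take i ts))" for i
    obtain P where walk: "stack_walk C P (length ts)" and "P 0 = []"
      and P: "\<And>i. reduced (P i) \<and> psl_eq (g i) (word_mat (P i))"
      using nf[OF ts] unfolding g_def by blast
    have "P (length ts) = []"
      using P[of "length ts"] reduced_word_mat_not_one psl_eq_sym one unfolding g_def by fastforce
    text \<open>The colour of a position also records the sign relating the prefix product to its normal form.\<close>
    define E where "E i = (g i = word_mat (P i))" for i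
    have g_sign: "g i = sign_mat (E i) (word_mat (P i))" for i
      unfolding E_def using P psl_eq_sign_mat by blast
    have "nested_repetition P (\<lambda>i. (f i, E i)) (length ts)"
      using pump[OF walk \<open>P 0 = []\<close> \<open>P (length ts) = []\<close> _ long] f by simp
    then obtain s1 s2 t2 t1 where order: "s1 < s2" "s2 \<le> t2" "t2 \<le> t1" "t1 \<le> length ts"
      and col: "f s1 = f s2" "f t2 = f t1" and adj: "mat_adj (g s1) \<cdot> g t1 = mat_adj (g s2) \<cdot> g t2"
      by (rule nested_repetition_adj_eq[OF _ g_sign])
    have dets: "\<forall>t\<in>set ts. mat_det (\<mu> t) = 1" using ts assms(2) by blast
    obtain a b c d e where "ts = a @ b @ c @ d @ e" "length a = s1" "length (a @ b) = s2"
      "length (a @ b @ c) = t2" "length (a @ b @ c @ d) = t1"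
      "mat_prod (map \<mu> b) \<cdot> mat_prod (map \<mu> c) \<cdot> mat_prod (map \<mu> d) = mat_prod (map \<mu> c)"
      by (rule mat_prod_prefix_cancel[OF dets less_imp_le[OF order(1)] order(2-4) adj[unfolded g_def]])
    moreover from this order(1) have "b \<noteq> []" by auto
    ultimately show "\<exists>a b c d e. ts = a @ b @ c @ d @ e \<and> b \<noteq> [] \<and>
        f (length a) = f (length (a @ b)) \<and> f (length (a @ b @ c)) = f (length (a @ b @ c @ d)) \<and>
        mat_prod (map \<mu> b) \<cdot> mat_prod (map \<mu> c) \<cdot> mat_prod (map \<mu> d) = mat_prod (map \<mu> c)"
      using col by blast
  qed
qed

section \<open>Paths of \<open>SL(2)\<close>-automata\<close>

fun is_path :: "nat \<Rightarrow> (nat \<times> 'a option \<times> nat \<times> 'm) list \<Rightarrow> nat \<Rightarrow> bool" where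
  "is_path p [] q \<longleftrightarrow> p = q"
| "is_path p ((p', s, q', m) # ts) q \<longleftrightarrow> p = p' \<and> is_path q' ts q"

fun path_end :: "nat \<Rightarrow> (nat \<times> 'a option \<times> nat \<times> 'm) list \<Rightarrow> nat" where
  "path_end p [] = p"
| "path_end p ((p', s, q', m) # ts) = path_end q' ts"

fun path_word :: "(nat \<times> 'a option \<times> nat \<times> 'm) list \<Rightarrow> 'a list" where
  "path_word [] = []"
| "path_word ((p, s, q, m) # ts) = (case s of None \<Rightarrow> [] | Some a \<Rightarrow> [a]) @ path_word ts"

fun trans_mat :: "nat \<times> 'a option \<times> nat \<times> 'm \<Rightarrow> 'm" where
  "trans_mat (p, s, q, m) = m"

lemma is_path_append: "is_path p (xs @ ys) q \<longleftrightarrow> (\<exists>r. is_path p xs r \<and> is_path r ys q)"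
  by (induction p xs q rule: is_path.induct) auto

lemma is_path_end: "is_path p xs q \<Longrightarrow> path_end p xs = q"
  by (induction p xs q rule: is_path.induct) auto

lemma path_end_in: "set ts \<subseteq> D \<Longrightarrow> path_end p ts \<in> insert p ((\<lambda>(p, s, q, m). q) ` D)"
  by (induction p ts rule: path_end.induct) force+

lemma path_word_append: "path_word (xs @ ys) = path_word xs @ path_word ys"
  by (induction xs rule: path_word.induct) auto

lemma length_path_word: "length (path_word ts) \<le> length ts"
  by (induction ts rule: path_word.induct) (auto split: option.splits)

lemma gaut_reach_SL2_iff:
  "(q, w, x) \<in> gaut_reach (SL2 :: 'r::comm_ring_1 mat22 monoid) D q0 \<longleftrightarrow>
    (\<exists>ts. set ts \<subseteq> D \<and> is_path q0 ts q \<and> path_word ts = w \<and> mat_prod (map trans_mat ts) = x)"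
proof
  assume "(q, w, x) \<in> gaut_reach SL2 D q0"
  then show "\<exists>ts. set ts \<subseteq> D \<and> is_path q0 ts q \<and> path_word ts = w \<and> mat_prod (map trans_mat ts) = x"
  proof (induction rule: gaut_reach.induct)
    case init
    then show ?case by (intro exI[of _ "[]"]) (simp add: one_SL2)
  next
    case (step q w x s q' m)
    then obtain ts where "set ts \<subseteq> D" "is_path q0 ts q" "path_word ts = w" "mat_prod (map trans_mat ts) = x"
      by blast
    then show ?case using step.hyps(2)
      by (intro exI[of _ "ts @ [(q, s, q', m)]"])
         (auto simp add: is_path_append path_word_append mat_prod_append mult_SL2 split: option.splits)
  qed
next
  assume "\<exists>ts. set ts \<subseteq> D \<and> is_path q0 ts q \<and> path_word ts = w \<and> mat_prod (map trans_mat ts) = x"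
  then obtain ts where "set ts \<subseteq> D" "is_path q0 ts q" "path_word ts = w" "mat_prod (map trans_mat ts) = x"
    by blast
  then show "(q, w, x) \<in> gaut_reach SL2 D q0"
  proof (induction ts arbitrary: q w x rule: rev_induct)
    case Nil
    have "(q0, [], \<one>\<^bsub>SL2\<^esub>) \<in> gaut_reach (SL2 :: 'r mat22 monoid) D q0"
      by (rule gaut_reach.init)
    then show ?case using Nil by (simp add: one_SL2)
  next
    case (snoc t ts)
    obtain p s q' m where t: "t = (p, s, q', m)" by (cases t)
    then have "is_path q0 ts p" "q' = q" using snoc.prems(2) by (auto simp add: is_path_append)
    then have "(p, path_word ts, mat_prod (map trans_mat ts)) \<in> gaut_reach SL2 D q0"
      using snoc by simp
    from gaut_reach.step[OF this, of s q' m] show ?case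
      using snoc.prems t \<open>q' = q\<close>
      by (simp add: path_word_append mat_prod_append mult_SL2 split: option.splits)
  qed
qed

lemma gaut_lang_SL2_iff:
  "w \<in> gaut_lang (SL2 :: 'r::comm_ring_1 mat22 monoid) D q0 Qa \<longleftrightarrow>
    (\<exists>ts. set ts \<subseteq> D \<and> (\<exists>q\<in>Qa. is_path q0 ts q) \<and> path_word ts = w \<and>
      mat_prod (map trans_mat ts) = mat_one)"
  unfolding gaut_lang_def one_SL2 gaut_reach_SL2_iff by blast

lemma is_path_pump:
  assumes "is_path p (a @ b @ c @ d @ e) q"
    and "path_end p (a @ b) = path_end p a" "path_end p (a @ b @ c @ d) = path_end p (a @ b @ c)"
  shows "is_path p (a @ c @ e) q" "is_path p (a @ b @ b @ c @ d @ d @ e) q"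
proof -
  obtain r1 r2 r3 r4 where r: "is_path p a r1" "is_path r1 b r2" "is_path r2 c r3" "is_path r3 d r4"
    "is_path r4 e q"
    using assms(1) unfolding is_path_append by blast
  have "path_end p a = r1" "path_end p (a @ b) = r2" "path_end p (a @ b @ c) = r3"
    "path_end p (a @ b @ c @ d) = r4"
    using r by (meson is_path_append is_path_end)+
  then have "r2 = r1" "r4 = r3" using assms(2,3) by simp_all
  then show "is_path p (a @ c @ e) q" "is_path p (a @ b @ b @ c @ d @ d @ e) q"
    using r unfolding is_path_append by blast+
qed

lemma SL2Z_path_pumping:
  fixes D :: "(nat \<times> 'a option \<times> nat \<times> int mat22) set"
  assumes "finite D" "\<forall>t\<in>D. mat_det (trans_mat t) = 1"
  obtains B where "\<And>ts q. set ts \<subseteq> D \<Longrightarrow> is_path q0 ts q \<Longrightarrow> mat_prod (map trans_mat ts) = mat_one \<Longrightarrow>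
    B < length ts \<Longrightarrow> \<exists>a b c d e. ts = a @ b @ c @ d @ e \<and> b \<noteq> [] \<and>
      is_path q0 (a @ c @ e) q \<and> mat_prod (map trans_mat (a @ c @ e)) = mat_one \<and>
      is_path q0 (a @ b @ b @ c @ d @ d @ e) q \<and> mat_prod (map trans_mat (a @ b @ b @ c @ d @ d @ e)) = mat_one"
proof -
  define F where "F = insert q0 ((\<lambda>(p, s, q, m). q) ` D)"
  have "finite F" unfolding F_def using assms(1) by simp
  then obtain B where pump: "\<And>ts f. set ts \<subseteq> D \<Longrightarrow> mat_prod (map trans_mat ts) = mat_one \<Longrightarrow>
    \<forall>i\<le>length ts. f i \<in> F \<Longrightarrow> B < length ts \<Longrightarrow>
    \<exists>a b c d e. ts = a @ b @ c @ d @ e \<and> b \<noteq> [] \<and>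
      f (length a) = f (length (a @ b)) \<and> f (length (a @ b @ c)) = f (length (a @ b @ c @ d)) \<and>
      mat_prod (map trans_mat b) \<cdot> mat_prod (map trans_mat c) \<cdot> mat_prod (map trans_mat d) =
        mat_prod (map trans_mat c)"
    using SL2Z_prod_pumping[OF assms] by blast
  show thesis
  proof (rule that)
    fix ts q
    assume ts: "set ts \<subseteq> D" and path: "is_path q0 ts q" and one: "mat_prod (map trans_mat ts) = mat_one"
      and "B < length ts"
    moreover have "\<forall>i\<le>length ts. path_end q0 (take i ts) \<in> F"
      unfolding F_def using ts by (intro allI impI path_end_in order_trans[OF set_take_subset])
    ultimately obtain a b c d e where split: "ts = a @ b @ c @ d @ e" and "b \<noteq> []"
      and loops: "path_end q0 a = path_end q0 (a @ b)" "path_end q0 (a @ b @ c) = path_end q0 (a @ b @ c @ d)"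
      and cancel: "mat_prod (map trans_mat b) \<cdot> mat_prod (map trans_mat c) \<cdot> mat_prod (map trans_mat d) =
        mat_prod (map trans_mat c)"
      using pump[of ts "\<lambda>i. path_end q0 (take i ts)"] by auto
    have "is_path q0 (a @ c @ e) q" "is_path q0 (a @ b @ b @ c @ d @ d @ e) q"
      using is_path_pump[OF _ loops[symmetric]] path unfolding split by blast+
    moreover have "mat_prod (map trans_mat (a @ c @ e)) = mat_one"
      "mat_prod (map trans_mat (a @ b @ b @ c @ d @ d @ e)) = mat_one"
      using mat_prod_pump[OF cancel] one unfolding split by simp_all
    ultimately show "\<exists>a b c d e. ts = a @ b @ c @ d @ e \<and> b \<noteq> [] \<and>
      is_path q0 (a @ c @ e) q \<and> mat_prod (map trans_mat (a @ c @ e)) = mat_one \<and>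
      is_path q0 (a @ b @ b @ c @ d @ d @ e) q \<and> mat_prod (map trans_mat (a @ b @ b @ c @ d @ d @ e)) = mat_one"
      using split \<open>b \<noteq> []\<close> by blast
  qed
qed

text \<open>Pumping a shortest accepting path guarantees that the pumped pieces read a nonempty word.\<close>

lemma SL2Z_lang_pumping:
  assumes "L \<in> lang_class SL2Z \<Sigma>"
  shows "\<exists>B. \<forall>w\<in>L. B < length w \<longrightarrow> (\<exists>x y z u v. w = x @ y @ z @ u @ v \<and> y @ u \<noteq> [] \<and>
    x @ z @ v \<in> L \<and> x @ y @ y @ z @ u @ u @ v \<in> L)"
proof -
  obtain Q D q0 Qa where aut: "is_gaut SL2Z \<Sigma> Q D q0 Qa" and L: "L = gaut_lang SL2Z D q0 Qa"
    using assms unfolding lang_class_def by blast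
  have D: "finite D" "\<forall>t\<in>D. mat_det (trans_mat t) = 1"
    using aut unfolding is_gaut_def by (auto simp add: carrier_SL2)
  obtain B where pump: "\<And>ts q. set ts \<subseteq> D \<Longrightarrow> is_path q0 ts q \<Longrightarrow>
    mat_prod (map trans_mat ts) = mat_one \<Longrightarrow> B < length ts \<Longrightarrow> \<exists>a b c d e. ts = a @ b @ c @ d @ e \<and> b \<noteq> [] \<and>
      is_path q0 (a @ c @ e) q \<and> mat_prod (map trans_mat (a @ c @ e)) = mat_one \<and>
      is_path q0 (a @ b @ b @ c @ d @ d @ e) q \<and> mat_prod (map trans_mat (a @ b @ b @ c @ d @ d @ e)) = mat_one"
    using SL2Z_path_pumping[OF D] by blast
  define acc where "acc ts \<longleftrightarrow> set ts \<subseteq> D \<and> (\<exists>q\<in>Qa. is_path q0 ts q) \<and>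
    mat_prod (map trans_mat ts) = mat_one" for ts
  have lang: "v \<in> L \<longleftrightarrow> (\<exists>ts. acc ts \<and> path_word ts = v)" for v
    unfolding L acc_def gaut_lang_SL2_iff by blast
  have "\<exists>x y z u v. w = x @ y @ z @ u @ v \<and> y @ u \<noteq> [] \<and> x @ z @ v \<in> L \<and> x @ y @ y @ z @ u @ u @ v \<in> L"
    if "w \<in> L" "B < length w" for w
  proof -
    have "\<exists>ts. acc ts \<and> path_word ts = w" using lang that(1) by blast
    then obtain ts where ts: "acc ts" "path_word ts = w"
      and shortest: "\<And>ts'. acc ts' \<and> path_word ts' = w \<Longrightarrow> length ts \<le> length ts'"
      using ex_has_least_nat[of "\<lambda>ts. acc ts \<and> path_word ts = w" _ length] by blast
    obtain q where q: "q \<in> Qa" "is_path q0 ts q" "set ts \<subseteq> D" "mat_prod (map trans_mat ts) = mat_one"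
      using ts(1) unfolding acc_def by blast
    moreover have "B < length ts" using length_path_word[of ts] ts(2) that(2) by simp
    ultimately obtain a b c d e where split: "ts = a @ b @ c @ d @ e" and "b \<noteq> []"
      and pumped: "is_path q0 (a @ c @ e) q" "mat_prod (map trans_mat (a @ c @ e)) = mat_one"
        "is_path q0 (a @ b @ b @ c @ d @ d @ e) q"
        "mat_prod (map trans_mat (a @ b @ b @ c @ d @ d @ e)) = mat_one"
      using pump[OF q(3,2,4)] by blast
    have "acc (a @ c @ e)" "acc (a @ b @ b @ c @ d @ d @ e)"
      using pumped q(1,3) unfolding acc_def split by auto
    then have "path_word (a @ c @ e) \<in> L" "path_word (a @ b @ b @ c @ d @ d @ e) \<in> L"
      using lang by blast+
    moreover have "path_word b @ path_word d \<noteq> []"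
    proof
      assume "path_word b @ path_word d = []"
      then have "path_word (a @ c @ e) = w" using ts(2) unfolding split by (simp add: path_word_append)
      then show False using shortest \<open>acc (a @ c @ e)\<close> \<open>b \<noteq> []\<close> unfolding split by fastforce
    qed
    moreover have "w = path_word a @ path_word b @ path_word c @ path_word d @ path_word e"
      using ts(2) unfolding split by (simp add: path_word_append)
    ultimately show ?thesis unfolding path_word_append by blast
  qed
  then show ?thesis by blast
qed

section \<open>The language \<open>{0\<^sup>n 1\<^sup>n 2\<^sup>n}\<close>\<close>

definition abc :: "nat \<Rightarrow> nat list" where
  "abc n = replicate n 0 @ replicate n 1 @ replicate n 2"

lemma count_list_abc: "a \<in> {0, 1, 2} \<Longrightarrow> count_list (abc n) a = n"
proof -
  have "count_list (replicate n b) a = (if b = a then n else 0)" for b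
    by (induction n) auto
  then show "a \<in> {0, 1, 2} \<Longrightarrow> count_list (abc n) a = n" by (auto simp add: abc_def)
qed

lemma set_abc: "set (abc n) \<subseteq> {0, 1, 2}"
  by (auto simp add: abc_def)

lemma sorted_abc: "sorted (abc n)"
  by (auto simp add: abc_def sorted_append)

lemma sorted_square_constant:
  assumes "sorted (y @ y)"
  obtains c where "set y \<subseteq> {c}"
proof -
  have "a = b" if "a \<in> set y" "b \<in> set y" for a b
    using assms that by (auto simp add: sorted_append intro: antisym)
  then show thesis using that by (cases y) auto
qed

lemma abc_not_pumpable:
  assumes "x @ y @ z @ u @ v \<in> range abc" "x @ z @ v \<in> range abc" "x @ y @ y @ z @ u @ u @ v \<in> range abc"
  shows "y @ u = []"
proof (rule ccontr)
  assume "y @ u \<noteq> []"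
  obtain n1 n0 n2 where n: "x @ y @ z @ u @ v = abc n1" "x @ z @ v = abc n0" "x @ y @ y @ z @ u @ u @ v = abc n2"
    using assms by auto
  have count: "count_list (y @ u) a = n1 - n0" if "a \<in> {0, 1, 2}" for a
    using count_list_abc[OF that, of n1] count_list_abc[OF that, of n0] unfolding n(1,2)[symmetric] by simp
  obtain a where a: "a \<in> set (y @ u)" using \<open>y @ u \<noteq> []\<close> by (cases "y @ u") auto
  moreover have "set (y @ u) \<subseteq> {0, 1, 2}"
    using set_abc[of n1] unfolding n(1)[symmetric] by auto
  ultimately have "n1 - n0 \<noteq> 0" using count[of a] by (auto simp add: count_list_0_iff)
  then have all: "{0, 1, 2} \<subseteq> set (y @ u)" using count by (metis count_list_0_iff subsetI)
  have "sorted (x @ (y @ y) @ z @ (u @ u) @ v)" using sorted_abc[of n2] n(3) by simp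
  then have "sorted (y @ y)" "sorted (u @ u)" by (metis sorted_append)+
  then obtain c c' where "set y \<subseteq> {c}" "set u \<subseteq> {c'}" by (metis sorted_square_constant)
  then have "{0, 1, 2} \<subseteq> {c, c'}" using all by auto
  then show False by auto
qed

lemma abc_not_SL2Z: "range abc \<notin> lang_class SL2Z {0, 1, 2}"
proof
  assume "range abc \<in> lang_class SL2Z {0, 1, 2}"
  from SL2Z_lang_pumping[OF this] obtain B where pump: "\<forall>w\<in>range abc. B < length w \<longrightarrow>
      (\<exists>x y z u v. w = x @ y @ z @ u @ v \<and> y @ u \<noteq> [] \<and> x @ z @ v \<in> range abc \<and>
        x @ y @ y @ z @ u @ u @ v \<in> range abc)" ..
  have "B < length (abc (B + 1))" unfolding abc_def by simp
  with pump obtain x y z u v where "abc (B + 1) = x @ y @ z @ u @ v" "y @ u \<noteq> []" "x @ z @ v \<in> range abc"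
    "x @ y @ y @ z @ u @ u @ v \<in> range abc"
    by (meson rangeI)
  moreover from this(1) have "x @ y @ z @ u @ v \<in> range abc" by (metis rangeI)
  ultimately show False using abc_not_pumpable by blast
qed

section \<open>An \<open>SL(2,\<rat>)\<close>-automaton for \<open>{0\<^sup>n 1\<^sup>n 2\<^sup>n}\<close>\<close>

definition diag :: "rat \<Rightarrow> rat mat22" where
  "diag r = (r, 0, 0, inverse r)"

lemma diag_mult: "diag r \<cdot> diag s = diag (r * s)"
  by (simp add: diag_def mult.commute)

text \<open>After reading \<open>0\<^sup>i 1\<^sup>j 2\<^sup>k\<close> the register holds \<open>diag (2\<^sup>i 3\<^sup>j / 6\<^sup>k)\<close>.\<close>

definition abc_aut :: "(nat \<times> nat option \<times> nat \<times> rat mat22) set" where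
  "abc_aut = {(0, Some 0, 0, diag 2), (0, None, 1, mat_one), (1, Some 1, 1, diag 3), (1, None, 2, mat_one),
     (2, Some 2, 2, diag (1/6))}"

lemma abc_aut_reach_cases:
  assumes "(q, w, x) \<in> gaut_reach SL2Q abc_aut 0"
  shows "\<exists>i j k. w = replicate i 0 @ replicate j 1 @ replicate k 2 \<and> x = diag (2^i * 3^j / 6^k) \<and>
    (q = 0 \<and> j = 0 \<and> k = 0 \<or> q = 1 \<and> k = 0 \<or> q = 2)"
  using assms
proof (induction rule: gaut_reach.induct)
  case init
  then show ?case by (intro exI[of _ 0]) (simp add: one_SL2 diag_def)
next
  case (step q w x s q' m)
  then obtain i j k where w: "w = replicate i 0 @ replicate j 1 @ replicate k 2"
    and x: "x = diag (2^i * 3^j / 6^k)" and q: "q = 0 \<and> j = 0 \<and> k = 0 \<or> q = 1 \<and> k = 0 \<or> q = 2"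
    by blast
  from step.hyps(2) show ?case
    unfolding abc_aut_def
  proof (elim insertE emptyE)
    assume "(q, s, q', m) = (0, Some 0, 0, diag 2)"
    then show ?thesis using w x q
      by (intro exI[of _ "Suc i"] exI[of _ 0] exI[of _ 0]) (simp add: mult_SL2 diag_mult replicate_append_same ac_simps)
  next
    assume "(q, s, q', m) = (0, None, 1, mat_one)"
    then show ?thesis using w x q by (intro exI[of _ i] exI[of _ 0] exI[of _ 0]) (simp add: mult_SL2)
  next
    assume "(q, s, q', m) = (1, Some 1, 1, diag 3)"
    then show ?thesis using w x q
      by (intro exI[of _ i] exI[of _ "Suc j"] exI[of _ 0]) (simp add: mult_SL2 diag_mult replicate_append_same ac_simps)
  next
    assume "(q, s, q', m) = (1, None, 2, mat_one)"
    then show ?thesis using w x q by (intro exI[of _ i] exI[of _ j] exI[of _ 0]) (simp add: mult_SL2)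
  next
    assume "(q, s, q', m) = (2, Some 2, 2, diag (1/6))"
    then show ?thesis using w x
      by (intro exI[of _ i] exI[of _ j] exI[of _ "Suc k"]) (simp add: mult_SL2 diag_mult replicate_append_same ac_simps)
  qed
qed

lemma abc_aut_loop:
  assumes "(q, w, diag t) \<in> gaut_reach SL2Q abc_aut 0" "(q, Some a, q, diag r) \<in> abc_aut"
  shows "(q, w @ replicate n a, diag (t * r^n)) \<in> gaut_reach SL2Q abc_aut 0"
proof (induction n)
  case (Suc n)
  have "(q, (w @ replicate n a) @ [a], diag (t * r^n) \<cdot> diag r) \<in> gaut_reach SL2Q abc_aut 0"
    using gaut_reach.step[OF Suc assms(2)] by (simp only: option.case mult_SL2)
  moreover have "(w @ replicate n a) @ [a] = w @ replicate (Suc n) a"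
    by (simp add: replicate_append_same)
  moreover have "diag (t * r^n) \<cdot> diag r = diag (t * r ^ Suc n)"
    by (simp add: diag_mult ac_simps)
  ultimately show ?case by (simp only:)
qed (use assms(1) in simp)

lemma abc_aut_reach_abc: "(2, abc n, mat_one) \<in> gaut_reach SL2Q abc_aut 0"
proof -
  have "(0, [], \<one>\<^bsub>SL2Q\<^esub>) \<in> gaut_reach SL2Q abc_aut 0"
    by (rule gaut_reach.init)
  then have "(0, [], diag 1) \<in> gaut_reach SL2Q abc_aut 0"
    by (simp add: one_SL2 diag_def)
  from abc_aut_loop[OF this, of 0 2 n] have "(0, replicate n 0, diag (2^n)) \<in> gaut_reach SL2Q abc_aut 0"
    by (simp add: abc_aut_def)
  from gaut_reach.step[OF this, of None 1 mat_one]
  have "(1, replicate n 0, diag (2^n)) \<in> gaut_reach SL2Q abc_aut 0"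
    by (simp add: abc_aut_def mult_SL2)
  from abc_aut_loop[OF this, of 1 3 n]
  have "(1, replicate n 0 @ replicate n 1, diag (2^n * 3^n)) \<in> gaut_reach SL2Q abc_aut 0"
    by (simp add: abc_aut_def)
  from gaut_reach.step[OF this, of None 2 mat_one]
  have "(2, replicate n 0 @ replicate n 1, diag (2^n * 3^n)) \<in> gaut_reach SL2Q abc_aut 0"
    by (simp add: abc_aut_def mult_SL2)
  from abc_aut_loop[OF this, of 2 "1/6" n]
  show ?thesis by (simp add: abc_aut_def abc_def diag_def power_divide flip: power_mult_distrib)
qed

lemma pow_2_3_inject: "(2::nat)^i * 3^j = 2^k * 3^l \<Longrightarrow> i = k \<and> j = l"
proof (induction i arbitrary: k)
  case 0
  then have "k = 0" by (cases k) (auto dest: arg_cong[of _ _ even])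
  then show ?case using 0 by simp
next
  case (Suc i)
  then obtain k' where "k = Suc k'" by (cases k) (auto dest: arg_cong[of _ _ even])
  then show ?case using Suc by simp
qed

lemma lang_abc_aut: "gaut_lang SL2Q abc_aut 0 {2} = range abc"
proof
  show "gaut_lang SL2Q abc_aut 0 {2} \<subseteq> range abc"
  proof
    fix w assume "w \<in> gaut_lang SL2Q abc_aut 0 {2}"
    then have "(2, w, mat_one) \<in> gaut_reach SL2Q abc_aut 0" by (simp add: gaut_lang_def one_SL2)
    then obtain i j k where w: "w = replicate i 0 @ replicate j 1 @ replicate k 2"
      and "mat_one = diag (2^i * 3^j / 6^k)"
      using abc_aut_reach_cases by blast
    then have "(2::rat)^i * 3^j / 6^k = 1"
      unfolding diag_def by (simp only: prod.inject)
    moreover have "(6::rat)^k = 2^k * 3^k"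
      using power_mult_distrib[of "2::rat" 3 k] by simp
    ultimately have "(2::rat)^i * 3^j = 2^k * 3^k"
      by simp
    then have "of_nat ((2::nat)^i * 3^j) = (of_nat (2^k * 3^k) :: rat)"
      by simp
    then have "(2::nat)^i * 3^j = 2^k * 3^k"
      by (simp only: of_nat_eq_iff)
    then have "i = k" "j = k" using pow_2_3_inject by blast+
    then have "w = abc k" using w unfolding abc_def by simp
    then show "w \<in> range abc" by simp
  qed
next
  show "range abc \<subseteq> gaut_lang SL2Q abc_aut 0 {2}"
    using abc_aut_reach_abc by (auto simp add: gaut_lang_def one_SL2)
qed

lemma abc_SL2Q: "range abc \<in> lang_class SL2Q {0, 1, 2}"
proof -
  have "is_gaut SL2Q {0, 1, 2} {0, 1, 2} abc_aut 0 {2}"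
    unfolding is_gaut_def abc_aut_def by (simp add: carrier_SL2 diag_def)
  then show ?thesis unfolding lang_class_def using lang_abc_aut by blast
qed

section \<open>Integer automata as rational automata\<close>

fun mat_of_int :: "int mat22 \<Rightarrow> 'r::comm_ring_1 mat22" where
  "mat_of_int (a, b, c, d) = (of_int a, of_int b, of_int c, of_int d)"

lemma mat_of_int_mult: "mat_of_int (x \<cdot> y) = mat_of_int x \<cdot> mat_of_int y"
  by (cases x; cases y) simp

lemma mat_det_of_int: "mat_det (mat_of_int x) = of_int (mat_det x)"
  by (cases x) simp

lemma mat_of_int_eq_one_iff: "(mat_of_int x :: 'r::{comm_ring_1, ring_char_0} mat22) = mat_one \<longleftrightarrow> x = mat_one"
  by (cases x) simp

lemma mat_prod_of_int: "mat_prod (map (mat_of_int \<circ> f) xs) = mat_of_int (mat_prod (map f xs))"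
  by (induction xs) (simp_all add: mat_of_int_mult)

fun map_trans :: "('m \<Rightarrow> 'n) \<Rightarrow> nat \<times> 'a option \<times> nat \<times> 'm \<Rightarrow> nat \<times> 'a option \<times> nat \<times> 'n" where
  "map_trans g (p, s, q, m) = (p, s, q, g m)"

lemma is_path_map_trans: "is_path p (map (map_trans g) ts) q \<longleftrightarrow> is_path p ts q"
  by (induction p ts q rule: is_path.induct) auto

lemma path_word_map_trans: "path_word (map (map_trans g) ts) = path_word ts"
  by (induction ts rule: path_word.induct) auto

lemma trans_mat_comp_map_trans: "trans_mat \<circ> map_trans g = g \<circ> trans_mat"
  by (rule ext) auto

lemma ex_set_subset_image: "(\<exists>ys. set ys \<subseteq> f ` A \<and> P ys) \<longleftrightarrow> (\<exists>xs. set xs \<subseteq> A \<and> P (map f xs))"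
proof -
  have "(\<exists>ys. set ys \<subseteq> f ` A \<and> P ys) \<longleftrightarrow> (\<exists>ys\<in>lists (f ` A). P ys)"
    by (simp add: lists_eq_set)
  also have "\<dots> \<longleftrightarrow> (\<exists>ys\<in>map f ` lists A. P ys)"
    by (simp only: lists_image)
  also have "\<dots> \<longleftrightarrow> (\<exists>xs. set xs \<subseteq> A \<and> P (map f xs))"
    by (simp add: lists_eq_set)
  finally show ?thesis .
qed

lemma gaut_lang_map_of_int:
  "gaut_lang (SL2 :: 'r::{comm_ring_1, ring_char_0} mat22 monoid) (map_trans mat_of_int ` D) q0 Qa =
    gaut_lang SL2Z D q0 Qa"
proof -
  have "((\<exists>q\<in>Qa. is_path q0 (map (map_trans mat_of_int) ts) q) \<and>
      path_word (map (map_trans mat_of_int) ts) = w \<and>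
      mat_prod (map trans_mat (map (map_trans mat_of_int) ts)) = (mat_one :: 'r mat22)) \<longleftrightarrow>
    ((\<exists>q\<in>Qa. is_path q0 ts q) \<and> path_word ts = w \<and> mat_prod (map trans_mat ts) = mat_one)"
    for ts :: "(nat \<times> 'a option \<times> nat \<times> int mat22) list" and w
    by (simp add: is_path_map_trans path_word_map_trans trans_mat_comp_map_trans mat_prod_of_int
        mat_of_int_eq_one_iff)
  note paths_of_int = this
  show ?thesis
    unfolding set_eq_iff gaut_lang_SL2_iff ex_set_subset_image paths_of_int by simp
qed

lemma is_gaut_map_trans:
  assumes "is_gaut G \<Sigma> Q D q0 Qa" "\<And>m. m \<in> carrier G \<Longrightarrow> g m \<in> carrier H"
  shows "is_gaut H \<Sigma> Q (map_trans g ` D) q0 Qa"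
  using assms unfolding is_gaut_def by force

lemma lang_class_SL2Z_subset:
  "lang_class SL2Z \<Sigma> \<subseteq> lang_class (SL2 :: 'r::{comm_ring_1, ring_char_0} mat22 monoid) \<Sigma>"
proof
  fix L assume "L \<in> lang_class SL2Z \<Sigma>"
  then obtain Q D q0 Qa where aut: "is_gaut SL2Z \<Sigma> Q D q0 Qa" and L: "L = gaut_lang SL2Z D q0 Qa"
    unfolding lang_class_def by blast
  have "mat_of_int m \<in> carrier (SL2 :: 'r mat22 monoid)" if "m \<in> carrier SL2Z" for m
    using that by (simp add: carrier_SL2 mat_det_of_int del: mat_of_int.simps mat_det.simps)
  then have "is_gaut (SL2 :: 'r mat22 monoid) \<Sigma> Q (map_trans mat_of_int ` D) q0 Qa"
    using is_gaut_map_trans[OF aut] by blast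
  then show "L \<in> lang_class (SL2 :: 'r mat22 monoid) \<Sigma>"
    unfolding lang_class_def L using gaut_lang_map_of_int by blast
qed

theorem theorem3p11:
  shows "(\<forall>\<Sigma> :: 'a set. finite \<Sigma> \<longrightarrow> lang_class SL2Z \<Sigma> \<subseteq> lang_class SL2Q \<Sigma>) \<and>
         (\<exists>\<Sigma> :: nat set. finite \<Sigma> \<and> lang_class SL2Z \<Sigma> \<subset> lang_class SL2Q \<Sigma>)"
proof
  show "\<forall>\<Sigma> :: 'a set. finite \<Sigma> \<longrightarrow> lang_class SL2Z \<Sigma> \<subseteq> lang_class SL2Q \<Sigma>"
    by (simp add: lang_class_SL2Z_subset)
  have "lang_class SL2Z {0, 1, 2} \<subset> lang_class SL2Q {0, 1, 2 :: nat}"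
    using lang_class_SL2Z_subset abc_SL2Q abc_not_SL2Z by (intro psubsetI) auto
  then show "\<exists>\<Sigma> :: nat set. finite \<Sigma> \<and> lang_class SL2Z \<Sigma> \<subset> lang_class SL2Q \<Sigma>"
    by (intro exI[of _ "{0, 1, 2}"]) simp
qed

end
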